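(* Let $A$ be a commutative algebra over a field with multiplication $\star$ satisfying the Tortken identity $$(a\star b)\star(c\star d)-(a\star d)\star(c\star b)=(a,b,c)\star d-(a,d,c)\star b\quad\text{for all }a,b,c,d\in A.$$ Then for all $a,b,c,x\in A$: $(a,x,b)\star c+(b,x,c)\star a+(c,x,a)\star b=0$.
   Context: The associator is $(a,b,c)=a\star(b\star c)-(a\star b)\star c$. *)

theory Defs
  imports Complex_Main
begin

definition comm_algebra ::
  "('k::field \<Rightarrow> 'a::ab_group_add \<Rightarrow> 'a) \<Rightarrow> ('a \<Rightarrow> 'a \<Rightarrow> 'a) \<Rightarrow> bool" where
  "comm_algebra sc m \<longleftrightarrow>
     vector_space sc \<and>
     (\<forall>x y z. m (x + y) z = m x z + m y z) \<and>
     (\<forall>x y z. m x (y + z) = m x y + m x z) \<and>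
     (\<forall>c x y. m (sc c x) y = sc c (m x y)) \<and>
     (\<forall>c x y. m x (sc c y) = sc c (m x y)) \<and>
     (\<forall>x y. m x y = m y x)"

definition assoc :: "('a::ab_group_add \<Rightarrow> 'a \<Rightarrow> 'a) \<Rightarrow> 'a \<Rightarrow> 'a \<Rightarrow> 'a \<Rightarrow> 'a" where
  "assoc m a b c = m a (m b c) - m (m a b) c"

definition tortken :: "('a::ab_group_add \<Rightarrow> 'a \<Rightarrow> 'a) \<Rightarrow> bool" where
  "tortken m \<longleftrightarrow> (\<forall>a b c d.
     m (m a b) (m c d) - m (m a d) (m c b) = m (assoc m a b c) d - m (assoc m a d c) b)"

end

theory Submission
  imports Defs
begin

text \<open>Summing the Tortken identity over the three cyclic shifts of (a, b, c), with x in the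
  second slot, the left-hand sides telescope to zero by commutativity. What remains is the
  claimed cyclic sum minus ((a,c,b) + (b,a,c) + (c,b,a)) \<star> x, and this cyclic sum of
  associators vanishes in every commutative algebra.\<close>

lemma assoc_cyclic_sum_eq_0:
  fixes m :: "'a::ab_group_add \<Rightarrow> 'a \<Rightarrow> 'a"
  assumes comm: "\<And>u v. m u v = m v u"
  shows "assoc m a c b + assoc m b a c + assoc m c b a = 0"
proof -
  have "m a (m c b) = m (m c b) a" "m b (m a c) = m (m a c) b" "m c (m b a) = m (m b a) c"
    by (rule comm)+
  then show ?thesis
    unfolding assoc_def by (simp add: algebra_simps)
qed

lemma tortken_cyclic_sum:
  fixes m :: "'a::ab_group_add \<Rightarrow> 'a \<Rightarrow> 'a"
  assumes "tortken m" and comm: "\<And>u v. m u v = m v u"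
  shows "m (assoc m a x b) c + m (assoc m b x c) a + m (assoc m c x a) b =
         m (assoc m a c b) x + m (assoc m b a c) x + m (assoc m c b a) x"
proof -
  have T: "m (m p q) (m r s) - m (m p s) (m r q) = m (assoc m p q r) s - m (assoc m p s r) q"
    for p q r s
    using \<open>tortken m\<close> unfolding tortken_def by blast
  have "m (m a c) (m b x) = m (m b x) (m c a)" "m (m b a) (m c x) = m (m c x) (m a b)"
       "m (m c b) (m a x) = m (m a x) (m b c)"
    by (metis comm)+
  then have "(m (assoc m a x b) c - m (assoc m a c b) x) + (m (assoc m b x c) a - m (assoc m b a c) x)
      + (m (assoc m c x a) b - m (assoc m c b a) x) = 0"
    unfolding T[symmetric] by (simp add: algebra_simps)
  then show ?thesis
    by (simp add: algebra_simps)
qed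

theorem mainTheorem6:
  fixes sc :: "'k::field \<Rightarrow> 'a::ab_group_add \<Rightarrow> 'a"
    and m :: "'a \<Rightarrow> 'a \<Rightarrow> 'a"
  assumes "comm_algebra sc m"
    and "tortken m"
  shows "\<forall>a b c x. m (assoc m a x b) c + m (assoc m b x c) a + m (assoc m c x a) b = 0"
proof (intro allI)
  fix a b c x
  have comm: "\<And>u v. m u v = m v u" and add_left: "\<And>u v w. m (u + v) w = m u w + m v w"
    using \<open>comm_algebra sc m\<close> unfolding comm_algebra_def by auto
  have zero_left: "m 0 w = 0" for w
    using add_left[of 0 0 w] by simp
  have "m (assoc m a x b) c + m (assoc m b x c) a + m (assoc m c x a) b =
        m (assoc m a c b + assoc m b a c + assoc m c b a) x"
    unfolding tortken_cyclic_sum[OF \<open>tortken m\<close> comm] add_left ..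
  also have "\<dots> = 0"
    unfolding assoc_cyclic_sum_eq_0[OF comm] zero_left ..
  finally show "m (assoc m a x b) c + m (assoc m b x c) a + m (assoc m c x a) b = 0" .
qed

end
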